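(* (Subject reduction for LPCF.) If $\Gamma;\Delta\vdash e:\tau$ and $e\rightsquigarrow e'$, then $\Gamma;\Delta\vdash e':\tau$.
   Context: LPCF (linear PCF). Types: $\tau ::= \mathsf{Nat}\mid\mathsf{Bool}\mid \tau\,\&\,\tau' \mid \tau\otimes\tau' \mid \tau\multimap\tau' \mid \tau\to\tau'$. Terms: $e ::= x \mid \mathtt{0},\mathtt{1},\mathtt{2},\dots \mid \mathtt{succ}\mid\mathtt{pred}\mid\mathtt{iszero} \mid \lambda x.e \mid e\,e' \mid \mathtt{true}\mid\mathtt{false} \mid \mathtt{if}\ e_1\ \mathtt{then}\ e_2\ \mathtt{else}\ e_3 \mid \langle e_1,e_2\rangle \mid \mathtt{proj}_i(e)\ (i=1,2) \mid \mathtt{fix}_\tau \mid e_1\otimes e_2 \mid \mathtt{let}\ x\otimes y = e\ \mathtt{in}\ e'$. Terms are identified up to renaming of bound variables and $e[e'/x]$ is capture-avoiding substitution. Typing judgements $\Gamma;\Delta\vdash e:\tau$, with $\Gamma$ (non-linear) and $\Delta$ (linear) finite maps from variables to types with disjoint domains ($\Delta,\Delta'$ denotes a disjoint union). Rules: $\Gamma;\emptyset\vdash x:\tau$ if $x:\tau\in\Gamma$; $\Gamma;x:\tau\vdash x:\tau$ if $x\notin\Gamma$; $\Gamma;\emptyset\vdash\mathtt{fix}_\tau:(\tau\to\tau)\to\tau$; $\Gamma;\emptyset\vdash n:\mathsf{Nat}$ for numerals; $\Gamma;\emptyset\vdash\mathtt{succ},\mathtt{pred}:\mathsf{Nat}\multimap\mathsf{Nat}$;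 $\Gamma;\emptyset\vdash\mathtt{iszero}:\mathsf{Nat}\multimap\mathsf{Bool}$; $\Gamma;\emptyset\vdash\mathtt{true},\mathtt{false}:\mathsf{Bool}$; from $\Gamma;\Delta\vdash e_1:\mathsf{Bool}$, $\Gamma;\Delta'\vdash e_2:\tau$, $\Gamma;\Delta'\vdash e_3:\tau$ infer $\Gamma;\Delta,\Delta'\vdash \mathtt{if}\ e_1\ \mathtt{then}\ e_2\ \mathtt{else}\ e_3:\tau$; from $\Gamma;\Delta\vdash e_i:\tau_i$ ($i=1,2$) infer $\Gamma;\Delta\vdash\langle e_1,e_2\rangle:\tau_1\&\tau_2$; from $\Gamma;\Delta\vdash e:\tau_1\&\tau_2$ infer $\Gamma;\Delta\vdash\mathtt{proj}_i(e):\tau_i$; from $\Gamma;\Delta_i\vdash e_i:\tau_i$ infer $\Gamma;\Delta_1,\Delta_2\vdash e_1\otimes e_2:\tau_1\otimes\tau_2$; from $\Gamma;\Delta,x:\tau_1,y:\tau_2\vdash e:\tau$ and $\Gamma;\Delta'\vdash e':\tau_1\otimes\tau_2$ infer $\Gamma;\Delta,\Delta'\vdash\mathtt{let}\ x\otimes y=e'\ \mathtt{in}\ e:\tau$; from $\Gamma,x:\tau;\Delta\vdash e:\tau'$ infer $\Gamma;\Delta\vdash\lambda x.e:\tau\to\tau'$; from $\Gamma;\Delta\vdash e:\tau'\to\tau$ and $\Gamma;\emptyset\vdash e':\tau'$ infer $\Gamma;\Delta\vdash e\,e':\tau$; from $\Gamma;\Delta,x:\tau\vdash e:\tau'$ infer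 $\Gamma;\Delta\vdash\lambda x.e:\tau\multimap\tau'$; from $\Gamma;\Delta\vdash e:\tau'\multimap\tau$ and $\Gamma;\Delta'\vdash e':\tau'$ infer $\Gamma;\Delta,\Delta'\vdash e\,e':\tau$. One-step reduction $\rightsquigarrow$: the least relation containing $(\lambda x.e)e'\rightsquigarrow e[e'/x]$; $\mathtt{fix}_\tau\,e\rightsquigarrow e(\mathtt{fix}_\tau\,e)$; $\mathtt{succ}\,n\rightsquigarrow n+1$; $\mathtt{pred}\,0\rightsquigarrow 0$; $\mathtt{pred}\,n\rightsquigarrow n-1$ ($n\ge1$); $\mathtt{iszero}\,0\rightsquigarrow\mathtt{true}$; $\mathtt{iszero}\,n\rightsquigarrow\mathtt{false}$ ($n\ge1$); $\mathtt{if}\ \mathtt{true}\ \mathtt{then}\ e_1\ \mathtt{else}\ e_2\rightsquigarrow e_1$; $\mathtt{if}\ \mathtt{false}\ \mathtt{then}\ e_1\ \mathtt{else}\ e_2\rightsquigarrow e_2$; $\mathtt{proj}_i\langle e_1,e_2\rangle\rightsquigarrow e_i$; $\mathtt{let}\ x\otimes y=e_1\otimes e_2\ \mathtt{in}\ e\rightsquigarrow e[e_1/x,e_2/y]$; and closed under $\mathcal{E}[e_1]\rightsquigarrow\mathcal{E}[e_2]$ when $e_1\rightsquigarrow e_2$, for evaluation contexts $\mathcal{E}::=[\,]\mid\mathtt{succ}(\mathcal{E})\mid\mathtt{pred}(\mathcal{E})\mid\mathtt{iszero}(\mathcal{E})\mid\mathcal{E}\,e\mid\mathtt{if}\ \mathcal{E}\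 \mathtt{then}\ e_1\ \mathtt{else}\ e_2\mid\mathtt{proj}_i(\mathcal{E})\mid\mathtt{let}\ x\otimes y=\mathcal{E}\ \mathtt{in}\ e$. *)

theory Defs
  imports Main
begin

text \<open>LPCF with de Bruijn indices (terms are thereby identified up to renaming
of bound variables). In Let_tensor body: index 1 is x, index 0 is y.\<close>

datatype ty = TNat | TBool | With ty ty | Tensor ty ty | Lolli ty ty | Arrow ty ty

datatype tm =
    Var nat
  | Num nat
  | Succ | Pred | IsZero
  | Lam tm
  | App tm tm
  | TT | FF
  | If tm tm tm
  | Pair tm tm
  | Proj1 tm | Proj2 tm
  | Fix ty
  | Tens tm tm
  | LetT tm tm   (* LetT e' e  =  let x \<otimes> y = e' in e, e binds 2 variables *)

fun rename :: "(nat \<Rightarrow> nat) \<Rightarrow> tm \<Rightarrow> tm" where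
  "rename r (Var i) = Var (r i)"
| "rename r (Num n) = Num n"
| "rename r Succ = Succ"
| "rename r Pred = Pred"
| "rename r IsZero = IsZero"
| "rename r (Lam e) = Lam (rename (\<lambda>i. case i of 0 \<Rightarrow> 0 | Suc j \<Rightarrow> Suc (r j)) e)"
| "rename r (App e1 e2) = App (rename r e1) (rename r e2)"
| "rename r TT = TT"
| "rename r FF = FF"
| "rename r (If e1 e2 e3) = If (rename r e1) (rename r e2) (rename r e3)"
| "rename r (Pair e1 e2) = Pair (rename r e1) (rename r e2)"
| "rename r (Proj1 e) = Proj1 (rename r e)"
| "rename r (Proj2 e) = Proj2 (rename r e)"
| "rename r (Fix t) = Fix t"
| "rename r (Tens e1 e2) = Tens (rename r e1) (rename r e2)"
| "rename r (LetT e1 e) = LetT (rename r e1)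
     (rename (\<lambda>i. case i of 0 \<Rightarrow> 0 | Suc 0 \<Rightarrow> Suc 0 | Suc (Suc j) \<Rightarrow> Suc (Suc (r j))) e)"

definition up :: "(nat \<Rightarrow> tm) \<Rightarrow> nat \<Rightarrow> tm" where
  "up \<sigma> i = (case i of 0 \<Rightarrow> Var 0 | Suc j \<Rightarrow> rename Suc (\<sigma> j))"

fun subst :: "(nat \<Rightarrow> tm) \<Rightarrow> tm \<Rightarrow> tm" where
  "subst \<sigma> (Var i) = \<sigma> i"
| "subst \<sigma> (Num n) = Num n"
| "subst \<sigma> Succ = Succ"
| "subst \<sigma> Pred = Pred"
| "subst \<sigma> IsZero = IsZero"
| "subst \<sigma> (Lam e) = Lam (subst (up \<sigma>) e)"
| "subst \<sigma> (App e1 e2) = App (subst \<sigma> e1) (subst \<sigma> e2)"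
| "subst \<sigma> TT = TT"
| "subst \<sigma> FF = FF"
| "subst \<sigma> (If e1 e2 e3) = If (subst \<sigma> e1) (subst \<sigma> e2) (subst \<sigma> e3)"
| "subst \<sigma> (Pair e1 e2) = Pair (subst \<sigma> e1) (subst \<sigma> e2)"
| "subst \<sigma> (Proj1 e) = Proj1 (subst \<sigma> e)"
| "subst \<sigma> (Proj2 e) = Proj2 (subst \<sigma> e)"
| "subst \<sigma> (Fix t) = Fix t"
| "subst \<sigma> (Tens e1 e2) = Tens (subst \<sigma> e1) (subst \<sigma> e2)"
| "subst \<sigma> (LetT e1 e) = LetT (subst \<sigma> e1) (subst (up (up \<sigma>)) e)"

definition scons :: "'a \<Rightarrow> (nat \<Rightarrow> 'a) \<Rightarrow> nat \<Rightarrow> 'a" where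
  "scons a f i = (case i of 0 \<Rightarrow> a | Suc j \<Rightarrow> f j)"

text \<open>e[e'/x] where x is the variable bound by the outermost binder (index 0).\<close>
definition subst1 :: "tm \<Rightarrow> tm \<Rightarrow> tm" where
  "subst1 e e' = subst (scons e' Var) e"

text \<open>e[e1/x, e2/y] for the body of a tensor let (x = index 1, y = index 0).\<close>
definition subst2 :: "tm \<Rightarrow> tm \<Rightarrow> tm \<Rightarrow> tm" where
  "subst2 e e1 e2 = subst (scons e2 (scons e1 Var)) e"

type_synonym ctx = "nat \<rightharpoonup> ty"

definition ext :: "ty option \<Rightarrow> ctx \<Rightarrow> ctx" where
  "ext a \<Gamma> = scons a \<Gamma>"

inductive typing :: "ctx \<Rightarrow> ctx \<Rightarrow> tm \<Rightarrow> ty \<Rightarrow> bool" ("_ ; _ \<turnstile> _ : _" [50,50,50,50] 50) where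
  T_VarNL: "\<Gamma> x = Some \<tau> \<Longrightarrow> \<Gamma>; Map.empty \<turnstile> Var x : \<tau>"
| T_VarL: "\<Gamma> x = None \<Longrightarrow> \<Gamma>; [x \<mapsto> \<tau>] \<turnstile> Var x : \<tau>"
| T_Fix: "\<Gamma>; Map.empty \<turnstile> Fix \<tau> : Arrow (Arrow \<tau> \<tau>) \<tau>"
| T_Num: "\<Gamma>; Map.empty \<turnstile> Num n : TNat"
| T_Succ: "\<Gamma>; Map.empty \<turnstile> Succ : Lolli TNat TNat"
| T_Pred: "\<Gamma>; Map.empty \<turnstile> Pred : Lolli TNat TNat"
| T_IsZero: "\<Gamma>; Map.empty \<turnstile> IsZero : Lolli TNat TBool"
| T_True: "\<Gamma>; Map.empty \<turnstile> TT : TBool"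
| T_False: "\<Gamma>; Map.empty \<turnstile> FF : TBool"
| T_If: "\<lbrakk> \<Gamma>; \<Delta> \<turnstile> e1 : TBool; \<Gamma>; \<Delta>' \<turnstile> e2 : \<tau>; \<Gamma>; \<Delta>' \<turnstile> e3 : \<tau>;
          dom \<Delta> \<inter> dom \<Delta>' = {} \<rbrakk> \<Longrightarrow> \<Gamma>; \<Delta> ++ \<Delta>' \<turnstile> If e1 e2 e3 : \<tau>"
| T_Pair: "\<lbrakk> \<Gamma>; \<Delta> \<turnstile> e1 : \<tau>1; \<Gamma>; \<Delta> \<turnstile> e2 : \<tau>2 \<rbrakk> \<Longrightarrow> \<Gamma>; \<Delta> \<turnstile> Pair e1 e2 : With \<tau>1 \<tau>2"
| T_Proj1: "\<Gamma>; \<Delta> \<turnstile> e : With \<tau>1 \<tau>2 \<Longrightarrow> \<Gamma>; \<Delta> \<turnstile> Proj1 e : \<tau>1"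
| T_Proj2: "\<Gamma>; \<Delta> \<turnstile> e : With \<tau>1 \<tau>2 \<Longrightarrow> \<Gamma>; \<Delta> \<turnstile> Proj2 e : \<tau>2"
| T_Tens: "\<lbrakk> \<Gamma>; \<Delta>1 \<turnstile> e1 : \<tau>1; \<Gamma>; \<Delta>2 \<turnstile> e2 : \<tau>2; dom \<Delta>1 \<inter> dom \<Delta>2 = {} \<rbrakk>
           \<Longrightarrow> \<Gamma>; \<Delta>1 ++ \<Delta>2 \<turnstile> Tens e1 e2 : Tensor \<tau>1 \<tau>2"
| T_Let: "\<lbrakk> ext None (ext None \<Gamma>); ext (Some \<tau>2) (ext (Some \<tau>1) \<Delta>) \<turnstile> e : \<tau>;
           \<Gamma>; \<Delta>' \<turnstile> e' : Tensor \<tau>1 \<tau>2; dom \<Delta> \<inter> dom \<Delta>' = {} \<rbrakk>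
           \<Longrightarrow> \<Gamma>; \<Delta> ++ \<Delta>' \<turnstile> LetT e' e : \<tau>"
| T_LamArr: "ext (Some \<tau>) \<Gamma>; ext None \<Delta> \<turnstile> e : \<tau>' \<Longrightarrow> \<Gamma>; \<Delta> \<turnstile> Lam e : Arrow \<tau> \<tau>'"
| T_AppArr: "\<lbrakk> \<Gamma>; \<Delta> \<turnstile> e : Arrow \<tau>' \<tau>; \<Gamma>; Map.empty \<turnstile> e' : \<tau>' \<rbrakk> \<Longrightarrow> \<Gamma>; \<Delta> \<turnstile> App e e' : \<tau>"
| T_LamLolli: "ext None \<Gamma>; ext (Some \<tau>) \<Delta> \<turnstile> e : \<tau>' \<Longrightarrow> \<Gamma>; \<Delta> \<turnstile> Lam e : Lolli \<tau> \<tau>'"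
| T_AppLolli: "\<lbrakk> \<Gamma>; \<Delta> \<turnstile> e : Lolli \<tau>' \<tau>; \<Gamma>; \<Delta>' \<turnstile> e' : \<tau>'; dom \<Delta> \<inter> dom \<Delta>' = {} \<rbrakk>
              \<Longrightarrow> \<Gamma>; \<Delta> ++ \<Delta>' \<turnstile> App e e' : \<tau>"

inductive step :: "tm \<Rightarrow> tm \<Rightarrow> bool" (infix "\<leadsto>" 50) where
  S_Beta: "App (Lam e) e' \<leadsto> subst1 e e'"
| S_Fix: "App (Fix \<tau>) e \<leadsto> App e (App (Fix \<tau>) e)"
| S_Succ: "App Succ (Num n) \<leadsto> Num (Suc n)"
| S_Pred0: "App Pred (Num 0) \<leadsto> Num 0"
| S_PredS: "n \<ge> 1 \<Longrightarrow> App Pred (Num n) \<leadsto> Num (n - 1)"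
| S_IsZero0: "App IsZero (Num 0) \<leadsto> TT"
| S_IsZeroS: "n \<ge> 1 \<Longrightarrow> App IsZero (Num n) \<leadsto> FF"
| S_IfT: "If TT e1 e2 \<leadsto> e1"
| S_IfF: "If FF e1 e2 \<leadsto> e2"
| S_Proj1: "Proj1 (Pair e1 e2) \<leadsto> e1"
| S_Proj2: "Proj2 (Pair e1 e2) \<leadsto> e2"
| S_Let: "LetT (Tens e1 e2) e \<leadsto> subst2 e e1 e2"
| C_Succ: "e \<leadsto> e' \<Longrightarrow> App Succ e \<leadsto> App Succ e'"
| C_Pred: "e \<leadsto> e' \<Longrightarrow> App Pred e \<leadsto> App Pred e'"
| C_IsZero: "e \<leadsto> e' \<Longrightarrow> App IsZero e \<leadsto> App IsZero e'"
| C_App: "e \<leadsto> e' \<Longrightarrow> App e e2 \<leadsto> App e' e2"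
| C_If: "e \<leadsto> e' \<Longrightarrow> If e e1 e2 \<leadsto> If e' e1 e2"
| C_Proj1: "e \<leadsto> e' \<Longrightarrow> Proj1 e \<leadsto> Proj1 e'"
| C_Proj2: "e \<leadsto> e' \<Longrightarrow> Proj2 e \<leadsto> Proj2 e'"
| C_Let: "e \<leadsto> e' \<Longrightarrow> LetT e e2 \<leadsto> LetT e' e2"

end

theory Submission
  imports Defs
begin

text \<open>
  Preservation under a redex reduces, by inversion of the typing rules, to a substitution lemma;
  the congruence steps follow from the induction hypothesis. With de Bruijn indices the
  substitution lemma must be proved for parallel substitutions, which in turn needs typing to be
  stable under injective renamings (used for the index shift under a binder). The linear
  content is resource accounting: a substitution is well typed from \<open>\<Gamma>;\<Delta>\<close> to \<open>\<Gamma>';\<Delta>'\<close>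
  when it sends each non-linear variable to a term using no linear resources and each linear
  variable \<open>x\<close> to a term typed in its own share \<open>D x\<close> of \<open>\<Delta>'\<close>, the shares being pairwise
  disjoint with union \<open>\<Delta>'\<close>. This invariant splits along every rule that divides the linear
  context (if, tensor, linear application, let) and extends under binders.
\<close>

lemma map_le_dom_eq: "m \<subseteq>\<^sub>m m' \<Longrightarrow> dom m' = dom m \<Longrightarrow> m = m'"
  by (metis map_le_antisym map_le_def)

lemma map_add_restrict_split: "dom m \<subseteq> A \<union> B \<Longrightarrow> m = m |` A ++ m |` B"
  by (rule ext) (auto simp: map_add_def restrict_map_def split: option.split)

lemma ext_simps [simp]: "ext a \<Gamma> 0 = a" "ext a \<Gamma> (Suc j) = \<Gamma> j"
  by (simp_all add: ext_def scons_def)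

lemma scons_simps [simp]: "scons a f 0 = a" "scons a f (Suc j) = f j"
  by (simp_all add: scons_def)

lemma up_simps [simp]: "up \<sigma> 0 = Var 0" "up \<sigma> (Suc j) = rename Suc (\<sigma> j)"
  by (simp_all add: up_def)

lemma dom_ext: "dom (ext a \<Gamma>) = (if a = None then {} else {0}) \<union> Suc ` dom \<Gamma>"
proof (rule set_eqI)
  show "x \<in> dom (ext a \<Gamma>) \<longleftrightarrow> x \<in> (if a = None then {} else {0}) \<union> Suc ` dom \<Gamma>" for x
    by (cases x) auto
qed

lemma dom_ext_None [simp]: "dom (ext None \<Gamma>) = Suc ` dom \<Gamma>"
  and dom_ext_Some [simp]: "dom (ext (Some t) \<Gamma>) = insert 0 (Suc ` dom \<Gamma>)"
  by (simp_all add: dom_ext)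

lemma ext_None_empty [simp]: "ext None Map.empty = Map.empty"
  by (rule ext) (simp add: ext_def scons_def split: nat.split)

lemma ext_map_le: "m \<subseteq>\<^sub>m m' \<Longrightarrow> ext a m \<subseteq>\<^sub>m ext a m'"
  by (auto simp: map_le_def ext_def scons_def split: nat.splits)

lemma typing_ctx_disjoint: "\<Gamma>; \<Delta> \<turnstile> e : \<tau> \<Longrightarrow> dom \<Gamma> \<inter> dom \<Delta> = {}"
  by (induction rule: typing.induct) (auto simp: image_Int[OF inj_Suc, symmetric] split: if_splits)

section \<open>Renaming\<close>

definition up_ren :: "(nat \<Rightarrow> nat) \<Rightarrow> nat \<Rightarrow> nat" where
  "up_ren r = (\<lambda>i. case i of 0 \<Rightarrow> 0 | Suc j \<Rightarrow> Suc (r j))"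

lemma up_ren_simps [simp]: "up_ren r 0 = 0" "up_ren r (Suc j) = Suc (r j)"
  by (simp_all add: up_ren_def)

lemma rename_Lam_up_ren [simp]: "rename r (Lam e) = Lam (rename (up_ren r) e)"
  by (simp add: up_ren_def)

lemma rename_LetT_up_ren [simp]:
  "rename r (LetT e1 e) = LetT (rename r e1) (rename (up_ren (up_ren r)) e)"
proof -
  have "(\<lambda>i. case i of 0 \<Rightarrow> 0 | Suc 0 \<Rightarrow> Suc 0 | Suc (Suc j) \<Rightarrow> Suc (Suc (r j))) = up_ren (up_ren r)"
    by (auto simp: up_ren_def split: nat.split)
  then show ?thesis by simp
qed

declare rename.simps(6,16) [simp del]

lemma inj_up_ren: "inj r \<Longrightarrow> inj (up_ren r)"
  by (auto simp: inj_def up_ren_def split: nat.splits)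

lemma ext_comp_up_ren: "ext a \<Gamma> \<circ> up_ren r = ext a (\<Gamma> \<circ> r)"
  by (auto simp: up_ren_def ext_def scons_def split: nat.split)

definition rename_ctx :: "(nat \<Rightarrow> nat) \<Rightarrow> ctx \<Rightarrow> ctx" where
  "rename_ctx r \<Delta> = (\<lambda>y. if y \<in> range r then \<Delta> (inv r y) else None)"

lemma rename_ctx_map_add: "rename_ctx r (\<Delta> ++ \<Delta>') = rename_ctx r \<Delta> ++ rename_ctx r \<Delta>'"
  by (auto simp: rename_ctx_def map_add_def split: option.split)

lemma dom_rename_ctx: "inj r \<Longrightarrow> dom (rename_ctx r \<Delta>) = r ` dom \<Delta>"
  by (auto simp: rename_ctx_def domI split: if_splits)

lemma rename_ctx_apply: "inj r \<Longrightarrow> rename_ctx r \<Delta> (r x) = \<Delta> x"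
  by (simp add: rename_ctx_def)

lemma rename_ctx_outside_range: "y \<notin> range r \<Longrightarrow> rename_ctx r \<Delta> y = None"
  by (simp add: rename_ctx_def)

lemma rename_ctx_empty [simp]: "rename_ctx r Map.empty = Map.empty"
  by (simp add: rename_ctx_def)

lemma rename_ctx_singleton: "inj r \<Longrightarrow> rename_ctx r [x \<mapsto> \<tau>] = [r x \<mapsto> \<tau>]"
  by (auto simp: rename_ctx_def fun_eq_iff inv_f_eq)

lemma rename_ctx_up_ren: "inj r \<Longrightarrow> rename_ctx (up_ren r) (ext a \<Delta>) = ext a (rename_ctx r \<Delta>)"
proof (rule ext)
  fix y assume r: "inj r"
  then have ur: "inj (up_ren r)" by (rule inj_up_ren)
  show "rename_ctx (up_ren r) (ext a \<Delta>) y = ext a (rename_ctx r \<Delta>) y"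
  proof (cases y)
    case 0
    then show ?thesis using rename_ctx_apply[OF ur, of _ 0] by simp
  next
    case (Suc z)
    show ?thesis
    proof (cases "z \<in> range r")
      case True
      then obtain w where "z = r w" by blast
      then show ?thesis
        using Suc rename_ctx_apply[OF ur, of _ "Suc w"] rename_ctx_apply[OF r] by simp
    next
      case False
      then have "y \<notin> range (up_ren r)" using Suc by (auto simp: up_ren_def split: nat.splits)
      then show ?thesis using False Suc by (simp add: rename_ctx_outside_range)
    qed
  qed
qed

lemma rename_ctx_Suc: "rename_ctx Suc \<Delta> = ext None \<Delta>"
proof (rule ext)
  show "rename_ctx Suc \<Delta> y = ext None \<Delta> y" for y
    by (cases y) (auto simp: rename_ctx_def)
qed

lemma rename_ctx_disjoint:
  "inj r \<Longrightarrow> dom \<Delta> \<inter> dom \<Delta>' = {} \<Longrightarrow> dom (rename_ctx r \<Delta>) \<inter> dom (rename_ctx r \<Delta>') = {}"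
  by (simp add: dom_rename_ctx image_Int[symmetric])

lemma rename_typing:
  assumes "\<Gamma>; \<Delta> \<turnstile> e : \<tau>" and "inj r" and "\<Gamma>' \<circ> r = \<Gamma>"
  shows "\<Gamma>'; rename_ctx r \<Delta> \<turnstile> rename r e : \<tau>"
  using assms
proof (induction arbitrary: r \<Gamma>' rule: typing.induct)
  case (T_VarL \<Gamma> x \<tau>)
  then have "\<Gamma>' (r x) = None" by auto
  then show ?case by (simp only: rename_ctx_singleton[OF T_VarL.prems(1)] rename.simps typing.T_VarL)
next
  case (T_If \<Gamma> \<Delta> e1 \<Delta>' e2 \<tau> e3)
  then show ?case
    by (auto simp: rename_ctx_map_add intro!: typing.T_If rename_ctx_disjoint)
next
  case (T_Tens \<Gamma> \<Delta>1 e1 \<tau>1 \<Delta>2 e2 \<tau>2)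
  then show ?case
    by (auto simp: rename_ctx_map_add intro!: typing.T_Tens rename_ctx_disjoint)
next
  case (T_AppLolli \<Gamma> \<Delta> e \<tau>' \<tau> \<Delta>' e')
  then show ?case
    by (auto simp: rename_ctx_map_add intro!: typing.T_AppLolli rename_ctx_disjoint)
next
  case (T_Let \<Gamma> \<tau>2 \<tau>1 \<Delta> e \<tau> \<Delta>' e')
  have "inj (up_ren (up_ren r))" and "ext None (ext None \<Gamma>') \<circ> up_ren (up_ren r) = ext None (ext None \<Gamma>)"
    using T_Let.prems(1) by (simp_all add: inj_up_ren ext_comp_up_ren T_Let.prems(2))
  from T_Let.IH(1)[OF this]
  have "ext None (ext None \<Gamma>'); ext (Some \<tau>2) (ext (Some \<tau>1) (rename_ctx r \<Delta>))
      \<turnstile> rename (up_ren (up_ren r)) e : \<tau>"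
    using T_Let.prems(1) by (simp add: rename_ctx_up_ren inj_up_ren)
  from typing.T_Let[OF this T_Let.IH(2)[OF T_Let.prems] rename_ctx_disjoint[OF T_Let.prems(1) T_Let.hyps(3)]]
  show ?case by (simp add: rename_ctx_map_add)
next
  case (T_LamArr \<tau> \<Gamma> \<Delta> e \<tau>')
  have "inj (up_ren r)" and "ext (Some \<tau>) \<Gamma>' \<circ> up_ren r = ext (Some \<tau>) \<Gamma>"
    using T_LamArr.prems(1) by (simp_all add: inj_up_ren ext_comp_up_ren T_LamArr.prems(2))
  from T_LamArr.IH[OF this] show ?case
    using T_LamArr.prems(1) by (auto simp: rename_ctx_up_ren intro: typing.T_LamArr)
next
  case (T_LamLolli \<Gamma> \<tau> \<Delta> e \<tau>')
  have "inj (up_ren r)" and "ext None \<Gamma>' \<circ> up_ren r = ext None \<Gamma>"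
    using T_LamLolli.prems(1) by (simp_all add: inj_up_ren ext_comp_up_ren T_LamLolli.prems(2))
  from T_LamLolli.IH[OF this] show ?case
    using T_LamLolli.prems(1) by (auto simp: rename_ctx_up_ren intro: typing.T_LamLolli)
next
  case (T_AppArr \<Gamma> \<Delta> e \<tau>' \<tau> e')
  have "\<Gamma>'; Map.empty \<turnstile> rename r e' : \<tau>'"
    using T_AppArr.IH(2)[OF T_AppArr.prems] by simp
  with T_AppArr.IH(1)[OF T_AppArr.prems] show ?case by (simp add: typing.T_AppArr)
qed (auto intro: typing.intros)

lemma shift_typing: "\<Gamma>; \<Delta> \<turnstile> e : \<tau> \<Longrightarrow> ext a \<Gamma>; ext None \<Delta> \<turnstile> rename Suc e : \<tau>"
  using rename_typing[of \<Gamma> \<Delta> e \<tau> Suc "ext a \<Gamma>"] by (simp add: rename_ctx_Suc comp_def)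

section \<open>Parallel substitution\<close>

definition typed_subst :: "ctx \<Rightarrow> ctx \<Rightarrow> ctx \<Rightarrow> (nat \<Rightarrow> tm) \<Rightarrow> (nat \<Rightarrow> ctx) \<Rightarrow> ctx \<Rightarrow> bool" where
  "typed_subst \<Gamma> \<Delta> \<Gamma>' \<sigma> D \<Delta>' \<longleftrightarrow>
     (\<forall>x t. \<Gamma> x = Some t \<longrightarrow> \<Gamma>'; Map.empty \<turnstile> \<sigma> x : t) \<and>
     (\<forall>x t. \<Delta> x = Some t \<longrightarrow> \<Gamma>'; D x \<turnstile> \<sigma> x : t) \<and>
     (\<forall>x\<in>dom \<Delta>. \<forall>y\<in>dom \<Delta>. x \<noteq> y \<longrightarrow> dom (D x) \<inter> dom (D y) = {}) \<and>
     (\<forall>x\<in>dom \<Delta>. D x \<subseteq>\<^sub>m \<Delta>') \<and>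
     dom \<Delta>' = (\<Union>x\<in>dom \<Delta>. dom (D x))"

lemma typed_substD:
  assumes "typed_subst \<Gamma> \<Delta> \<Gamma>' \<sigma> D \<Delta>'"
  shows typed_subst_nonlinear: "\<Gamma> x = Some t \<Longrightarrow> \<Gamma>'; Map.empty \<turnstile> \<sigma> x : t"
    and typed_subst_linear: "\<Delta> x = Some t \<Longrightarrow> \<Gamma>'; D x \<turnstile> \<sigma> x : t"
    and typed_subst_disjoint: "x \<in> dom \<Delta> \<Longrightarrow> y \<in> dom \<Delta> \<Longrightarrow> x \<noteq> y \<Longrightarrow> dom (D x) \<inter> dom (D y) = {}"
    and typed_subst_le: "x \<in> dom \<Delta> \<Longrightarrow> D x \<subseteq>\<^sub>m \<Delta>'"
    and typed_subst_dom: "dom \<Delta>' = (\<Union>x\<in>dom \<Delta>. dom (D x))"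
  using assms by (simp_all add: typed_subst_def)

lemma typed_subst_empty: "typed_subst \<Gamma> Map.empty \<Gamma>' \<sigma> D \<Delta>' \<Longrightarrow> \<Delta>' = Map.empty"
  by (simp add: typed_subst_def)

lemma typed_subst_drop_linear:
  "typed_subst \<Gamma> \<Delta> \<Gamma>' \<sigma> D \<Delta>' \<Longrightarrow> typed_subst \<Gamma> Map.empty \<Gamma>' \<sigma> D Map.empty"
  by (simp add: typed_subst_def)

lemma typed_subst_singleton:
  "typed_subst \<Gamma> [x \<mapsto> t] \<Gamma>' \<sigma> D \<Delta>' \<Longrightarrow> \<Gamma>'; \<Delta>' \<turnstile> \<sigma> x : t"
  unfolding typed_subst_def using map_le_dom_eq[of "D x" \<Delta>'] by auto

lemma typed_subst_restrict:
  assumes "typed_subst \<Gamma> \<Delta> \<Gamma>' \<sigma> D \<Delta>'" and "\<Delta>0 \<subseteq>\<^sub>m \<Delta>"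
  shows "typed_subst \<Gamma> \<Delta>0 \<Gamma>' \<sigma> D (\<Delta>' |` (\<Union>x\<in>dom \<Delta>0. dom (D x)))"
  unfolding typed_subst_def
proof (intro conjI allI impI ballI)
  let ?U = "\<Union>x\<in>dom \<Delta>0. dom (D x)"
  have dom_sub: "dom \<Delta>0 \<subseteq> dom \<Delta>"
    using assms(2) by (rule map_le_implies_dom_le)
  show "\<Gamma>'; Map.empty \<turnstile> \<sigma> x : t" if "\<Gamma> x = Some t" for x t
    using assms(1) that by (rule typed_subst_nonlinear)
  show "\<Gamma>'; D x \<turnstile> \<sigma> x : t" if "\<Delta>0 x = Some t" for x t
    using assms that by (force simp: map_le_def intro: typed_subst_linear)
  show "dom (D x) \<inter> dom (D y) = {}" if "x \<in> dom \<Delta>0" "y \<in> dom \<Delta>0" "x \<noteq> y" for x y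
    using that dom_sub by (intro typed_subst_disjoint[OF assms(1)]) auto
  show "D x \<subseteq>\<^sub>m \<Delta>' |` ?U" if x: "x \<in> dom \<Delta>0" for x
  proof -
    have "D x \<subseteq>\<^sub>m \<Delta>'" using x dom_sub by (intro typed_subst_le[OF assms(1)]) auto
    moreover have "dom (D x) \<subseteq> ?U" using x by (rule UN_upper)
    ultimately show ?thesis by (auto simp: map_le_def subset_iff)
  qed
  have "?U \<subseteq> dom \<Delta>'"
    using typed_subst_dom[OF assms(1)] UN_mono[OF dom_sub order_refl, of "\<lambda>x. dom (D x)"] by simp
  then show "dom (\<Delta>' |` ?U) = ?U" by auto
qed

lemma typed_subst_split:
  assumes "typed_subst \<Gamma> (\<Delta>1 ++ \<Delta>2) \<Gamma>' \<sigma> D \<Delta>'" and "dom \<Delta>1 \<inter> dom \<Delta>2 = {}"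
  obtains \<Delta>1' \<Delta>2' where "\<Delta>' = \<Delta>1' ++ \<Delta>2'" and "dom \<Delta>1' \<inter> dom \<Delta>2' = {}"
    and "typed_subst \<Gamma> \<Delta>1 \<Gamma>' \<sigma> D \<Delta>1'" and "typed_subst \<Gamma> \<Delta>2 \<Gamma>' \<sigma> D \<Delta>2'"
proof
  let ?U = "\<lambda>\<Delta>. \<Union>x\<in>dom \<Delta>. dom (D x)"
  have "\<Delta>1 \<subseteq>\<^sub>m \<Delta>1 ++ \<Delta>2"
    using map_add_comm[OF assms(2)] by (simp add: map_le_iff_map_add_commute)
  with assms(1) show "typed_subst \<Gamma> \<Delta>1 \<Gamma>' \<sigma> D (\<Delta>' |` ?U \<Delta>1)"
    by (rule typed_subst_restrict)
  show "typed_subst \<Gamma> \<Delta>2 \<Gamma>' \<sigma> D (\<Delta>' |` ?U \<Delta>2)"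
    using assms(1) map_le_map_add by (rule typed_subst_restrict)
  have "dom \<Delta>' = ?U \<Delta>1 \<union> ?U \<Delta>2"
    using typed_subst_dom[OF assms(1)] by auto
  then show "\<Delta>' = \<Delta>' |` ?U \<Delta>1 ++ \<Delta>' |` ?U \<Delta>2"
    by (simp add: map_add_restrict_split)
  have "dom (D i) \<inter> dom (D j) = {}" if "i \<in> dom \<Delta>1" "j \<in> dom \<Delta>2" for i j
    using typed_subst_disjoint[OF assms(1), of i j] that assms(2) by auto
  then have "?U \<Delta>1 \<inter> ?U \<Delta>2 = {}"
    by blast
  then show "dom (\<Delta>' |` ?U \<Delta>1) \<inter> dom (\<Delta>' |` ?U \<Delta>2) = {}"
    by auto
qed

lemma typed_subst_id:
  assumes "dom \<Gamma> \<inter> dom \<Delta> = {}"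
  shows "typed_subst \<Gamma> \<Delta> \<Gamma> Var (\<lambda>j. \<Delta> |` {j}) \<Delta>"
proof -
  have "\<Gamma>; \<Delta> |` {x} \<turnstile> Var x : t" if "\<Delta> x = Some t" for x t
  proof -
    have "\<Delta> |` {x} = [x \<mapsto> t]" using that by (auto simp: restrict_map_def)
    moreover have "\<Gamma> x = None" using assms that by blast
    ultimately show ?thesis by (simp add: T_VarL)
  qed
  then show ?thesis
    unfolding typed_subst_def by (auto simp: T_VarNL map_le_def)
qed

lemma typed_subst_shift:
  assumes "typed_subst \<Gamma>1 \<Delta>1 \<Gamma> \<sigma> D \<Delta>'"
  shows "typed_subst \<Gamma>1 \<Delta>1 (ext a \<Gamma>) (\<lambda>j. rename Suc (\<sigma> j)) (\<lambda>j. ext None (D j)) (ext None \<Delta>')"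
  unfolding typed_subst_def
proof (intro conjI allI impI ballI)
  show "ext a \<Gamma>; Map.empty \<turnstile> rename Suc (\<sigma> x) : t" if "\<Gamma>1 x = Some t" for x t
    using shift_typing[OF typed_subst_nonlinear[OF assms that], of a] by simp
  show "ext a \<Gamma>; ext None (D x) \<turnstile> rename Suc (\<sigma> x) : t" if "\<Delta>1 x = Some t" for x t
    using typed_subst_linear[OF assms that] by (rule shift_typing)
  show "dom (ext None (D x)) \<inter> dom (ext None (D y)) = {}"
    if "x \<in> dom \<Delta>1" "y \<in> dom \<Delta>1" "x \<noteq> y" for x y
    using typed_subst_disjoint[OF assms that] by (simp add: image_Int[OF inj_Suc, symmetric])
  show "ext None (D x) \<subseteq>\<^sub>m ext None \<Delta>'" if "x \<in> dom \<Delta>1" for x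
    using typed_subst_le[OF assms that] by (rule ext_map_le)
  show "dom (ext None \<Delta>') = (\<Union>x\<in>dom \<Delta>1. dom (ext None (D x)))"
    using typed_subst_dom[OF assms] by (simp add: image_UN)
qed

lemma typed_subst_cons_linear:
  assumes "typed_subst \<Gamma>1 \<Delta>1 \<Gamma> \<sigma> D \<Delta>'" and "\<Gamma>; \<Delta>0 \<turnstile> e : t" and "dom \<Delta>' \<inter> dom \<Delta>0 = {}"
  shows "typed_subst (ext None \<Gamma>1) (ext (Some t) \<Delta>1) \<Gamma> (scons e \<sigma>) (scons \<Delta>0 D) (\<Delta>' ++ \<Delta>0)"
  unfolding typed_subst_def
proof (intro conjI allI impI ballI)
  show "\<Gamma>; Map.empty \<turnstile> scons e \<sigma> x : t'" if "ext None \<Gamma>1 x = Some t'" for x t'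
    using that typed_subst_nonlinear[OF assms(1)] by (cases x) auto
  show "\<Gamma>; scons \<Delta>0 D x \<turnstile> scons e \<sigma> x : t'" if "ext (Some t) \<Delta>1 x = Some t'" for x t'
    using that typed_subst_linear[OF assms(1)] assms(2) by (cases x) auto
  have "dom \<Delta>0 \<inter> dom (D j) = {}" if "j \<in> dom \<Delta>1" for j
    using map_le_implies_dom_le[OF typed_subst_le[OF assms(1) that]] assms(3) by blast
  then show "dom (scons \<Delta>0 D x) \<inter> dom (scons \<Delta>0 D y) = {}"
    if "x \<in> dom (ext (Some t) \<Delta>1)" "y \<in> dom (ext (Some t) \<Delta>1)" "x \<noteq> y" for x y
    using that by (cases x; cases y) (simp_all add: inj_image_mem_iff Int_commute typed_subst_disjoint[OF assms(1)])
  have "\<Delta>' \<subseteq>\<^sub>m \<Delta>' ++ \<Delta>0"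
    using map_add_comm[OF assms(3)] by (simp add: map_le_iff_map_add_commute)
  then show "scons \<Delta>0 D x \<subseteq>\<^sub>m \<Delta>' ++ \<Delta>0" if "x \<in> dom (ext (Some t) \<Delta>1)" for x
    using that typed_subst_le[OF assms(1)] by (cases x) (auto intro: map_le_trans)
  show "dom (\<Delta>' ++ \<Delta>0) = (\<Union>x\<in>dom (ext (Some t) \<Delta>1). dom (scons \<Delta>0 D x))"
    using typed_subst_dom[OF assms(1)] by (auto simp: image_UN)
qed

lemma typed_subst_cons_nonlinear:
  assumes "typed_subst \<Gamma>1 \<Delta>1 \<Gamma> \<sigma> D \<Delta>'" and "\<Gamma>; Map.empty \<turnstile> e : t"
  shows "typed_subst (ext (Some t) \<Gamma>1) (ext None \<Delta>1) \<Gamma> (scons e \<sigma>) (scons Map.empty D) \<Delta>'"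
  unfolding typed_subst_def
proof (intro conjI allI impI ballI)
  show "\<Gamma>; Map.empty \<turnstile> scons e \<sigma> x : t'" if "ext (Some t) \<Gamma>1 x = Some t'" for x t'
    using that typed_subst_nonlinear[OF assms(1)] assms(2) by (cases x) auto
  show "\<Gamma>; scons Map.empty D x \<turnstile> scons e \<sigma> x : t'" if "ext None \<Delta>1 x = Some t'" for x t'
    using that typed_subst_linear[OF assms(1)] by (cases x) auto
  show "dom (scons Map.empty D x) \<inter> dom (scons Map.empty D y) = {}"
    if "x \<in> dom (ext None \<Delta>1)" "y \<in> dom (ext None \<Delta>1)" "x \<noteq> y" for x y
    using that by (cases x; cases y) (simp_all add: inj_image_mem_iff typed_subst_disjoint[OF assms(1)])
  show "scons Map.empty D x \<subseteq>\<^sub>m \<Delta>'" if "x \<in> dom (ext None \<Delta>1)" for x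
    using that typed_subst_le[OF assms(1)] by (cases x) auto
  show "dom \<Delta>' = (\<Union>x\<in>dom (ext None \<Delta>1). dom (scons Map.empty D x))"
    using typed_subst_dom[OF assms(1)] by (simp add: image_UN)
qed

lemma up_eq_scons: "up \<sigma> = scons (Var 0) (\<lambda>j. rename Suc (\<sigma> j))"
  by (simp add: fun_eq_iff up_def scons_def)

lemma ext_None_upd_0: "(ext None \<Delta>)(0 \<mapsto> t) = ext (Some t) \<Delta>"
  by (rule ext) (simp add: ext_def scons_def split: nat.split)

lemma typed_subst_up_linear:
  assumes "typed_subst \<Gamma>1 \<Delta>1 \<Gamma> \<sigma> D \<Delta>'"
  shows "typed_subst (ext None \<Gamma>1) (ext (Some t) \<Delta>1) (ext None \<Gamma>) (up \<sigma>)
           (scons [0 \<mapsto> t] (\<lambda>j. ext None (D j))) (ext (Some t) \<Delta>')"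
proof -
  have "ext None \<Gamma>; [0 \<mapsto> t] \<turnstile> Var 0 : t" by (rule T_VarL) simp
  from typed_subst_cons_linear[OF typed_subst_shift[OF assms] this]
  show ?thesis by (simp add: up_eq_scons ext_None_upd_0)
qed

lemma typed_subst_up_nonlinear:
  assumes "typed_subst \<Gamma>1 \<Delta>1 \<Gamma> \<sigma> D \<Delta>'"
  shows "typed_subst (ext (Some t) \<Gamma>1) (ext None \<Delta>1) (ext (Some t) \<Gamma>) (up \<sigma>)
           (scons Map.empty (\<lambda>j. ext None (D j))) (ext None \<Delta>')"
proof -
  have "ext (Some t) \<Gamma>; Map.empty \<turnstile> Var 0 : t" by (rule T_VarNL) simp
  from typed_subst_cons_nonlinear[OF typed_subst_shift[OF assms] this]
  show ?thesis by (simp add: up_eq_scons)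
qed

lemma subst_typing:
  assumes "\<Gamma>; \<Delta> \<turnstile> e : \<tau>" and "typed_subst \<Gamma> \<Delta> \<Gamma>' \<sigma> D \<Delta>'"
  shows "\<Gamma>'; \<Delta>' \<turnstile> subst \<sigma> e : \<tau>"
  using assms
proof (induction arbitrary: \<Gamma>' \<sigma> D \<Delta>' rule: typing.induct)
  case (T_VarNL \<Gamma> x \<tau>)
  then show ?case by (auto simp: typed_subst_def)
next
  case (T_VarL \<Gamma> x \<tau>)
  from typed_subst_singleton[OF T_VarL.prems] show ?case by simp
next
  case (T_If \<Gamma> \<Delta> e1 \<Delta>'' e2 \<tau> e3)
  from T_If.prems T_If.hyps(4) obtain A B where "\<Delta>' = A ++ B" "dom A \<inter> dom B = {}"
    "typed_subst \<Gamma> \<Delta> \<Gamma>' \<sigma> D A" "typed_subst \<Gamma> \<Delta>'' \<Gamma>' \<sigma> D B"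
    by (rule typed_subst_split)
  with T_If.IH show ?case by (simp add: typing.T_If)
next
  case (T_Tens \<Gamma> \<Delta>1 e1 \<tau>1 \<Delta>2 e2 \<tau>2)
  from T_Tens.prems T_Tens.hyps(3) obtain A B where "\<Delta>' = A ++ B" "dom A \<inter> dom B = {}"
    "typed_subst \<Gamma> \<Delta>1 \<Gamma>' \<sigma> D A" "typed_subst \<Gamma> \<Delta>2 \<Gamma>' \<sigma> D B"
    by (rule typed_subst_split)
  with T_Tens.IH show ?case by (simp add: typing.T_Tens)
next
  case (T_AppLolli \<Gamma> \<Delta> e \<tau>' \<tau> \<Delta>'' e')
  from T_AppLolli.prems T_AppLolli.hyps(3) obtain A B where "\<Delta>' = A ++ B" and disj: "dom A \<inter> dom B = {}"
    and A: "typed_subst \<Gamma> \<Delta> \<Gamma>' \<sigma> D A" and B: "typed_subst \<Gamma> \<Delta>'' \<Gamma>' \<sigma> D B"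
    by (rule typed_subst_split)
  with typing.T_AppLolli[OF T_AppLolli.IH(1)[OF A] T_AppLolli.IH(2)[OF B] disj] show ?case by simp
next
  case (T_Let \<Gamma> \<tau>2 \<tau>1 \<Delta> e \<tau> \<Delta>'' e')
  from T_Let.prems T_Let.hyps(3) obtain A B where split: "\<Delta>' = A ++ B" "dom A \<inter> dom B = {}"
    and A: "typed_subst \<Gamma> \<Delta> \<Gamma>' \<sigma> D A" and B: "typed_subst \<Gamma> \<Delta>'' \<Gamma>' \<sigma> D B"
    by (rule typed_subst_split)
  from typed_subst_up_linear[OF typed_subst_up_linear[OF A]]
  have "ext None (ext None \<Gamma>'); ext (Some \<tau>2) (ext (Some \<tau>1) A) \<turnstile> subst (up (up \<sigma>)) e : \<tau>"
    by (rule T_Let.IH(1))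
  with T_Let.IH(2)[OF B] split show ?case by (simp add: typing.T_Let)
next
  case (T_LamArr \<tau> \<Gamma> \<Delta> e \<tau>')
  from T_LamArr.IH[OF typed_subst_up_nonlinear[OF T_LamArr.prems]]
  show ?case by (simp add: typing.T_LamArr)
next
  case (T_LamLolli \<Gamma> \<tau> \<Delta> e \<tau>')
  from T_LamLolli.IH[OF typed_subst_up_linear[OF T_LamLolli.prems]]
  show ?case by (simp add: typing.T_LamLolli)
next
  case (T_AppArr \<Gamma> \<Delta> e \<tau>' \<tau> e')
  from T_AppArr.IH(2)[OF typed_subst_drop_linear[OF T_AppArr.prems]]
  show ?case using T_AppArr.IH(1)[OF T_AppArr.prems] by (simp add: typing.T_AppArr)
next
  case (T_Proj1 \<Gamma> \<Delta> e \<tau>1 \<tau>2)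
  from T_Proj1.IH[OF T_Proj1.prems] show ?case by (auto intro: typing.T_Proj1)
next
  case (T_Proj2 \<Gamma> \<Delta> e \<tau>1 \<tau>2)
  from T_Proj2.IH[OF T_Proj2.prems] show ?case by (auto intro: typing.T_Proj2)
qed (auto dest: typed_subst_empty intro: typing.intros)

section \<open>Subject reduction\<close>

inductive_cases AppE [consumes 1, case_names arrow lolli]: "\<Gamma>; \<Delta> \<turnstile> App e1 e2 : \<tau>"
inductive_cases LamE: "\<Gamma>; \<Delta> \<turnstile> Lam e : \<tau>"
inductive_cases FixE: "\<Gamma>; \<Delta> \<turnstile> Fix t : \<tau>"
inductive_cases SuccE: "\<Gamma>; \<Delta> \<turnstile> Succ : \<tau>"
inductive_cases PredE: "\<Gamma>; \<Delta> \<turnstile> Pred : \<tau>"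
inductive_cases IsZeroE: "\<Gamma>; \<Delta> \<turnstile> IsZero : \<tau>"
inductive_cases NumE: "\<Gamma>; \<Delta> \<turnstile> Num n : \<tau>"
inductive_cases TTE: "\<Gamma>; \<Delta> \<turnstile> TT : \<tau>"
inductive_cases FFE: "\<Gamma>; \<Delta> \<turnstile> FF : \<tau>"
inductive_cases IfE: "\<Gamma>; \<Delta> \<turnstile> If e1 e2 e3 : \<tau>"
inductive_cases PairE: "\<Gamma>; \<Delta> \<turnstile> Pair e1 e2 : \<tau>"
inductive_cases Proj1E: "\<Gamma>; \<Delta> \<turnstile> Proj1 e : \<tau>"
inductive_cases Proj2E: "\<Gamma>; \<Delta> \<turnstile> Proj2 e : \<tau>"
inductive_cases TensE: "\<Gamma>; \<Delta> \<turnstile> Tens e1 e2 : \<tau>"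
inductive_cases LetE [consumes 1, case_names let_tensor]: "\<Gamma>; \<Delta> \<turnstile> LetT e1 e2 : \<tau>"

lemma beta_typing:
  assumes "\<Gamma>; \<Delta> \<turnstile> App (Lam e) e' : \<tau>"
  shows "\<Gamma>; \<Delta> \<turnstile> subst1 e e' : \<tau>"
  using assms
proof (cases rule: AppE)
  case (arrow \<tau>')
  then have body: "ext (Some \<tau>') \<Gamma>; ext None \<Delta> \<turnstile> e : \<tau>"
    by (auto elim: LamE)
  have "typed_subst (ext (Some \<tau>') \<Gamma>) (ext None \<Delta>) \<Gamma> (scons e' Var) (scons Map.empty (\<lambda>j. \<Delta> |` {j})) \<Delta>"
    using typed_subst_id[OF typing_ctx_disjoint[OF arrow(1)]] arrow(2) by (rule typed_subst_cons_nonlinear)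
  with body show ?thesis
    unfolding subst1_def by (rule subst_typing)
next
  case (lolli \<Delta>1 \<tau>' \<Delta>2)
  then have body: "ext None \<Gamma>; ext (Some \<tau>') \<Delta>1 \<turnstile> e : \<tau>"
    by (auto elim: LamE)
  have "typed_subst (ext None \<Gamma>) (ext (Some \<tau>') \<Delta>1) \<Gamma> (scons e' Var) (scons \<Delta>2 (\<lambda>j. \<Delta>1 |` {j})) (\<Delta>1 ++ \<Delta>2)"
    using typed_subst_id[OF typing_ctx_disjoint[OF lolli(2)]] lolli(3,4) by (rule typed_subst_cons_linear)
  with body show ?thesis
    unfolding subst1_def \<open>\<Delta> = \<Delta>1 ++ \<Delta>2\<close> by (rule subst_typing)
qed

lemma let_tensor_typing:
  assumes "\<Gamma>; \<Delta> \<turnstile> LetT (Tens e1 e2) e : \<tau>"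
  shows "\<Gamma>; \<Delta> \<turnstile> subst2 e e1 e2 : \<tau>"
  using assms
proof (cases rule: LetE)
  case (let_tensor \<tau>2 \<tau>1 \<Delta>0 \<Delta>')
  from let_tensor(3) obtain \<Delta>1 \<Delta>2 where "\<Delta>' = \<Delta>1 ++ \<Delta>2" and "dom \<Delta>1 \<inter> dom \<Delta>2 = {}"
    and e1: "\<Gamma>; \<Delta>1 \<turnstile> e1 : \<tau>1" and e2: "\<Gamma>; \<Delta>2 \<turnstile> e2 : \<tau>2"
    by (auto elim: TensE)
  have "dom \<Gamma> \<inter> dom \<Delta>0 = {}"
    using typing_ctx_disjoint[OF assms] let_tensor(1) by auto
  from typed_subst_cons_linear[OF typed_subst_cons_linear[OF typed_subst_id[OF this] e1] e2]
  have "typed_subst (ext None (ext None \<Gamma>)) (ext (Some \<tau>2) (ext (Some \<tau>1) \<Delta>0)) \<Gamma>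
          (scons e2 (scons e1 Var)) (scons \<Delta>2 (scons \<Delta>1 (\<lambda>j. \<Delta>0 |` {j}))) (\<Delta>0 ++ \<Delta>1 ++ \<Delta>2)"
    using let_tensor(4) \<open>\<Delta>' = \<Delta>1 ++ \<Delta>2\<close> \<open>dom \<Delta>1 \<inter> dom \<Delta>2 = {}\<close> by auto
  with let_tensor(2) show ?thesis
    unfolding subst2_def let_tensor(1) \<open>\<Delta>' = \<Delta>1 ++ \<Delta>2\<close> by (simp add: subst_typing)
qed

lemma step_preserves_typing: "e \<leadsto> e' \<Longrightarrow> \<Gamma>; \<Delta> \<turnstile> e : \<tau> \<Longrightarrow> \<Gamma>; \<Delta> \<turnstile> e' : \<tau>"
proof (induction arbitrary: \<Gamma> \<Delta> \<tau> rule: step.induct)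
  case (S_Beta e e')
  then show ?case by (rule beta_typing)
next
  case (S_Let e1 e2 e)
  then show ?case by (rule let_tensor_typing)
next
  case (S_Fix t e)
  then show ?case
    by (cases rule: AppE) (auto elim!: FixE intro: typing.T_AppArr typing.T_Fix)
next
  case (C_Succ e e')
  from C_Succ.prems show ?case
    by (cases rule: AppE) (auto elim!: SuccE intro: typing.T_AppLolli typing.T_Succ C_Succ.IH)
next
  case (C_Pred e e')
  from C_Pred.prems show ?case
    by (cases rule: AppE) (auto elim!: PredE intro: typing.T_AppLolli typing.T_Pred C_Pred.IH)
next
  case (C_IsZero e e')
  from C_IsZero.prems show ?case
    by (cases rule: AppE) (auto elim!: IsZeroE intro: typing.T_AppLolli typing.T_IsZero C_IsZero.IH)
next
  case (C_App e e' e2)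
  from C_App.prems show ?case
    by (cases rule: AppE) (auto intro: typing.T_AppLolli typing.T_AppArr C_App.IH)
next
  case (C_If e e' e1 e2)
  then show ?case by (auto elim!: IfE intro: typing.T_If)
next
  case (C_Proj1 e e')
  then show ?case by (auto elim!: Proj1E intro: typing.T_Proj1)
next
  case (C_Proj2 e e')
  then show ?case by (auto elim!: Proj2E intro: typing.T_Proj2)
next
  case (C_Let e e' e2)
  then show ?case by (auto elim!: LetE intro: typing.T_Let)
qed (auto elim!: AppE IfE Proj1E Proj2E SuccE PredE IsZeroE NumE TTE FFE PairE intro: typing.intros)

theorem proposition2:
  assumes "finite (dom \<Gamma>)" and "finite (dom \<Delta>)" and "dom \<Gamma> \<inter> dom \<Delta> = {}"
    and "\<Gamma>; \<Delta> \<turnstile> e : \<tau>" and "e \<leadsto> e'"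
  shows "\<Gamma>; \<Delta> \<turnstile> e' : \<tau>"
  using assms(5,4) by (rule step_preserves_typing)

end
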